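(* Under the same setting, let $\bm u_0^m,\bm u_1^m\in\mathbb R^d$, $\eta_0^m,\eta_1^m>0$, $\alpha\in[0,1]$, $\lambda_{ij}=\dfrac{\Delta t S_{ij}}{1+\alpha\Delta t(S_{ij}+S_{ji})}$, and assume either $\Delta t S_{01},\Delta t S_{10}\le 1$ or $\alpha=1$. Define $\eta_i^{n+1}$ by $\eta_0^{n+1}=(1-\lambda_{01})\eta_0^m+\lambda_{10}\eta_1^m$, $\eta_1^{n+1}=(1-\lambda_{10})\eta_1^m+\lambda_{01}\eta_0^m$, momenta $\bm F_0^{n+1}=(1-\lambda_{01})\eta_0^m\bm u_0^m+\lambda_{10}\eta_1^m\bm u_1^m$, $\bm F_1^{n+1}=(1-\lambda_{10})\eta_1^m\bm u_1^m+\lambda_{01}\eta_0^m\bm u_0^m$, and $\bm u_i^{n+1}=\bm F_i^{n+1}/\eta_i^{n+1}$ (assuming $\eta_i^{n+1}>0$). Then total momentum is conserved and the total kinetic energy does not increase: $$\sum_{i=0}^1\tfrac12\eta_i^{n+1}|\bm u_i^{n+1}|^2\le\sum_{i=0}^1\tfrac12\eta_i^m|\bm u_i^m|^2.$$ More precisely, the kinetic energy decreases by $\Delta K=\tfrac12\mu\,|\bm u_0^m-\bm u_1^m|^2\ge 0$, where $$\mu=\frac{\eta_0^m\eta_1^m\left[(1-\lambda_{01})\lambda_{01}\eta_0^m+(1-\lambda_{10})\lambda_{10}\eta_1^m\right]}{\left[\lambda_{01}\eta_0^m+(1-\lambda_{10})\eta_1^m\right]\left[\lambda_{10}\eta_1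^m+(1-\lambda_{01})\eta_0^m\right]}.$$
   Context: "Method 2" (mass-weighted) momentum transfers for a two-fluid system (fluids 0 and 1), with the same implicitness weight $\alpha$ for mass and momentum transfers. $\eta_i$ is the mass per unit volume of fluid $i$, $\bm u_i$ its velocity, $S_{ij}\ge0$ the mass transfer rate from fluid $i$ to fluid $j$, $\Delta t$ the timestep; superscript $m$ denotes values before the transfer step, $n+1$ after. The kinetic energy of the two-fluid system is $\sum_i \frac12\eta_i|\bm u_i|^2$. *)

theory Defs
  imports "HOL-Analysis.Analysis"
begin

definition transfer_lambda :: "real \<Rightarrow> real \<Rightarrow> real \<Rightarrow> real \<Rightarrow> real" where
  "transfer_lambda \<alpha> dt Sij Sji = dt * Sij / (1 + \<alpha> * dt * (Sij + Sji))"

end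

theory Submission
  imports Defs
begin

text \<open>Each fluid's new velocity is the mass-weighted average of two parcels: the retained
  mass \<open>(1 - \<lambda>\<^sub>i\<^sub>j) \<eta>\<^sub>i\<close> moving with \<open>u\<^sub>i\<close> and the received mass \<open>\<lambda>\<^sub>j\<^sub>i \<eta>\<^sub>j\<close> moving with \<open>u\<^sub>j\<close>.
  Merging masses \<open>m, n\<close> with velocities \<open>v, w\<close> conserves momentum and destroys kinetic
  energy \<open>m n / (2 (m + n)) |v - w|\<^sup>2\<close>. Writing \<open>a, b\<close> and \<open>c, d\<close> for the parcel masses of
  fluids 0 and 1, the paper's \<open>\<mu>\<close> is \<open>a b / (a + b) + c d / (c + d)\<close>, and the bounds
  \<open>0 \<le> \<lambda>\<^sub>i\<^sub>j \<le> 1\<close> (this is where the time-step condition enters) make all four masses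
  nonnegative.\<close>

lemma transfer_lambda_bounds:
  assumes "0 \<le> \<alpha>" "0 \<le> dt" "0 \<le> Sij" "0 \<le> Sji" "dt * Sij \<le> 1 \<or> \<alpha> = 1"
  shows "0 \<le> transfer_lambda \<alpha> dt Sij Sji" "transfer_lambda \<alpha> dt Sij Sji \<le> 1"
proof -
  have den: "1 \<le> 1 + \<alpha> * dt * (Sij + Sji)"
    using assms by simp
  have "dt * Sij \<le> 1 + \<alpha> * dt * (Sij + Sji)"
    using assms(5)
  proof
    assume "dt * Sij \<le> 1"
    then show ?thesis using den by linarith
  next
    assume "\<alpha> = 1"
    then show ?thesis using assms by (simp add: distrib_left)
  qed
  moreover have "0 \<le> dt * Sij"
    using assms by simp
  ultimately show "0 \<le> transfer_lambda \<alpha> dt Sij Sji" "transfer_lambda \<alpha> dt Sij Sji \<le> 1"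
    using den unfolding transfer_lambda_def by simp_all
qed

lemma merge_energy_loss:
  fixes v w :: "'a::real_inner" and m n :: real
  assumes "m + n \<noteq> 0"
  shows "m * (norm v)\<^sup>2 + n * (norm w)\<^sup>2
           - (m + n) * (norm ((1 / (m + n)) *\<^sub>R (m *\<^sub>R v + n *\<^sub>R w)))\<^sup>2
         = m * n / (m + n) * (norm (v - w))\<^sup>2"
proof -
  have "(norm (m *\<^sub>R v + n *\<^sub>R w))\<^sup>2 = m\<^sup>2 * (v \<bullet> v) + 2 * m * n * (v \<bullet> w) + n\<^sup>2 * (w \<bullet> w)"
    unfolding power2_norm_eq_inner
    by (simp add: inner_add inner_commute power2_eq_square algebra_simps)
  then have "(m + n) * (norm ((1 / (m + n)) *\<^sub>R (m *\<^sub>R v + n *\<^sub>R w)))\<^sup>2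
        = (m\<^sup>2 * (v \<bullet> v) + 2 * m * n * (v \<bullet> w) + n\<^sup>2 * (w \<bullet> w)) / (m + n)"
    using assms by (simp add: power_mult_distrib power_divide power2_eq_square)
  moreover have "(norm (v - w))\<^sup>2 = v \<bullet> v - 2 * (v \<bullet> w) + w \<bullet> w"
    unfolding power2_norm_eq_inner by (simp add: inner_diff inner_commute)
  ultimately show ?thesis
    using assms unfolding power2_norm_eq_inner
    by (simp add: divide_simps) (simp add: power2_eq_square algebra_simps)
qed

theorem mainTheorem5:
  fixes u0 u1 :: "'a :: euclidean_space"
    and \<eta>0 \<eta>1 \<alpha> dt S01 S10 :: real
  assumes h\<eta>0: "\<eta>0 > 0" and h\<eta>1: "\<eta>1 > 0"
    and h\<alpha>: "0 \<le> \<alpha>" "\<alpha> \<le> 1"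
    and hdt: "dt > 0"
    and hS: "S01 \<ge> 0" "S10 \<ge> 0"
    and hcfl: "(dt * S01 \<le> 1 \<and> dt * S10 \<le> 1) \<or> \<alpha> = 1"
  defines "lam01 \<equiv> transfer_lambda \<alpha> dt S01 S10"
    and "lam10 \<equiv> transfer_lambda \<alpha> dt S10 S01"
  defines "\<eta>0n \<equiv> (1 - lam01) * \<eta>0 + lam10 * \<eta>1"
    and "\<eta>1n \<equiv> (1 - lam10) * \<eta>1 + lam01 * \<eta>0"
  defines "F0n \<equiv> ((1 - lam01) * \<eta>0) *\<^sub>R u0 + (lam10 * \<eta>1) *\<^sub>R u1"
    and "F1n \<equiv> ((1 - lam10) * \<eta>1) *\<^sub>R u1 + (lam01 * \<eta>0) *\<^sub>R u0"
  defines "u0n \<equiv> (1 / \<eta>0n) *\<^sub>R F0n"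
    and "u1n \<equiv> (1 / \<eta>1n) *\<^sub>R F1n"
  defines "\<mu> \<equiv> \<eta>0 * \<eta>1 * ((1 - lam01) * lam01 * \<eta>0 + (1 - lam10) * lam10 * \<eta>1)
               / ((lam01 * \<eta>0 + (1 - lam10) * \<eta>1) * (lam10 * \<eta>1 + (1 - lam01) * \<eta>0))"
  defines "Kold \<equiv> (1/2) * \<eta>0 * (norm u0)\<^sup>2 + (1/2) * \<eta>1 * (norm u1)\<^sup>2"
    and "Knew \<equiv> (1/2) * \<eta>0n * (norm u0n)\<^sup>2 + (1/2) * \<eta>1n * (norm u1n)\<^sup>2"
  assumes hpos: "\<eta>0n > 0" "\<eta>1n > 0"
  shows "\<eta>0n *\<^sub>R u0n + \<eta>1n *\<^sub>R u1n = \<eta>0 *\<^sub>R u0 + \<eta>1 *\<^sub>R u1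
         \<and> Knew \<le> Kold
         \<and> Kold - Knew = (1/2) * \<mu> * (norm (u0 - u1))\<^sup>2
         \<and> (1/2) * \<mu> * (norm (u0 - u1))\<^sup>2 \<ge> 0"
proof -
  have lam01: "0 \<le> lam01" "lam01 \<le> 1" and lam10: "0 \<le> lam10" "lam10 \<le> 1"
    using transfer_lambda_bounds[of \<alpha> dt] h\<alpha> hdt hS hcfl
    unfolding lam01_def lam10_def by auto
  define a b c d where "a = (1 - lam01) * \<eta>0" and "b = lam10 * \<eta>1"
    and "c = (1 - lam10) * \<eta>1" and "d = lam01 * \<eta>0"
  have abcd: "0 \<le> a" "0 \<le> b" "0 \<le> c" "0 \<le> d"
    using lam01 lam10 h\<eta>0 h\<eta>1 unfolding a_def b_def c_def d_def by simp_all
  have ab: "\<eta>0n = a + b" and cd: "\<eta>1n = c + d"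
    unfolding \<eta>0n_def \<eta>1n_def a_def b_def c_def d_def by simp_all
  have mom: "\<eta>0n *\<^sub>R u0n + \<eta>1n *\<^sub>R u1n = \<eta>0 *\<^sub>R u0 + \<eta>1 *\<^sub>R u1"
    using hpos unfolding u0n_def u1n_def F0n_def F1n_def by (simp add: algebra_simps)
  have u0n: "u0n = (1 / (a + b)) *\<^sub>R (a *\<^sub>R u0 + b *\<^sub>R u1)"
    and u1n: "u1n = (1 / (c + d)) *\<^sub>R (c *\<^sub>R u1 + d *\<^sub>R u0)"
    unfolding u0n_def u1n_def F0n_def F1n_def ab cd a_def b_def c_def d_def by simp_all
  have mu: "\<mu> = a * b / (a + b) + c * d / (c + d)"
    using hpos unfolding \<mu>_def ab cd a_def b_def c_def d_def by (simp add: field_simps)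
  have "\<eta>0 = a + d" "\<eta>1 = b + c"
    unfolding a_def b_def c_def d_def by (simp_all add: algebra_simps)
  then have "Kold - Knew
      = (1/2) * (a * (norm u0)\<^sup>2 + b * (norm u1)\<^sup>2 - (a + b) * (norm u0n)\<^sup>2)
      + (1/2) * (c * (norm u1)\<^sup>2 + d * (norm u0)\<^sup>2 - (c + d) * (norm u1n)\<^sup>2)"
    unfolding Kold_def Knew_def ab cd by (simp add: field_simps)
  also have "\<dots> = (1/2) * \<mu> * (norm (u0 - u1))\<^sup>2"
    using merge_energy_loss[of a b u0 u1] merge_energy_loss[of c d u1 u0] hpos
    unfolding u0n u1n ab cd mu by (simp add: norm_minus_commute algebra_simps)
  finally have loss: "Kold - Knew = (1/2) * \<mu> * (norm (u0 - u1))\<^sup>2" .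
  have "0 \<le> \<mu>"
    unfolding mu using abcd by simp
  then have loss_nonneg: "0 \<le> (1/2) * \<mu> * (norm (u0 - u1))\<^sup>2"
    by simp
  with loss have "Knew \<le> Kold"
    by linarith
  with mom loss loss_nonneg show ?thesis
    by blast
qed

end
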